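(* Let $m,n$ be integers with $2\le m<n$, and let $G$ be a Latin square graph $\mathrm{LSG}(m,n)$ (associated with some transversal 2-design $\mathrm{TD}(m,n)$). Then $\alpha(\overline{G})=\Theta(\overline{G})=\vartheta(\overline{G})=n$.
   Context: Graphs are finite, simple, undirected; $\overline{G}$ is the complement, $\alpha$ the independence number, $\Theta(G)=\sup_{k\ge1}\alpha(G^{\boxtimes k})^{1/k}$ the Shannon capacity (with $\boxtimes$ the strong product: distinct $(g,h),(g',h')$ adjacent iff ($g=g'$ or $g\sim g'$) and ($h=h'$ or $h\sim h'$)), and $\vartheta(G)$ the Lovász theta function: the maximum of $\mathrm{Tr}(BJ)$ over positive semidefinite $B$ indexed by $V(G)$ with $\mathrm{Tr}B=1$ and $B_{i,j}=0$ for $\{i,j\}\in E(G)$, $J$ the all-ones matrix. A transversal 2-design $\mathrm{TD}(m,n)$ ($m\ge2,n\ge1$) is a triple $(X,\mathscr G,\mathscr B)$ where $X$ is a set of $mn$ points, $\mathscr G$ is a partition of $X$ into $m$ groups of $n$ points each, and $\mathscr B$ is a family of subsets (blocks) of $X$ such that every block contains exactly one point of each group and every two points in different groups lie together in exactly one block. The Latin square graph $\mathrm{LSG}(m,n)$ of such a design has vertex set $\mathscr B$, two distinct blocks being adjacent iff they intersect in exactly one point. *)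

theory Defs
  imports Complex_Main "HOL-Library.Disjoint_Sets" "HOL-Library.FuncSet"
begin

text \<open>A simple graph is given by a vertex set V and an adjacency relation E
  (assumed symmetric and irreflexive where relevant; all notions below only
  look at E on V).\<close>

definition complement_graph :: "('a \<Rightarrow> 'a \<Rightarrow> bool) \<Rightarrow> 'a \<Rightarrow> 'a \<Rightarrow> bool" where
  "complement_graph E x y \<longleftrightarrow> x \<noteq> y \<and> \<not> E x y"

definition independent_set :: "'a set \<Rightarrow> ('a \<Rightarrow> 'a \<Rightarrow> bool) \<Rightarrow> 'a set \<Rightarrow> bool" where
  "independent_set V E S \<longleftrightarrow> S \<subseteq> V \<and> (\<forall>x\<in>S. \<forall>y\<in>S. \<not> E x y)"

definition independence_number :: "'a set \<Rightarrow> ('a \<Rightarrow> 'a \<Rightarrow> bool) \<Rightarrow> nat" where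
  "independence_number V E = Max {card S | S. independent_set V E S}"

definition strong_power_vertices :: "'a set \<Rightarrow> nat \<Rightarrow> (nat \<Rightarrow> 'a) set" where
  "strong_power_vertices V k = PiE {..<k} (\<lambda>_. V)"

definition strong_power_adj :: "('a \<Rightarrow> 'a \<Rightarrow> bool) \<Rightarrow> nat \<Rightarrow> (nat \<Rightarrow> 'a) \<Rightarrow> (nat \<Rightarrow> 'a) \<Rightarrow> bool" where
  "strong_power_adj E k f g \<longleftrightarrow> f \<noteq> g \<and> (\<forall>i<k. f i = g i \<or> E (f i) (g i))"

definition shannon_capacity :: "'a set \<Rightarrow> ('a \<Rightarrow> 'a \<Rightarrow> bool) \<Rightarrow> real" where
  "shannon_capacity V E =
     (SUP k\<in>{1..}. root k (real (independence_number (strong_power_vertices V k) (strong_power_adj E k))))"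

definition psd_on :: "'a set \<Rightarrow> ('a \<Rightarrow> 'a \<Rightarrow> real) \<Rightarrow> bool" where
  "psd_on V B \<longleftrightarrow> (\<forall>i\<in>V. \<forall>j\<in>V. B i j = B j i) \<and>
     (\<forall>x :: 'a \<Rightarrow> real. (\<Sum>i\<in>V. \<Sum>j\<in>V. x i * B i j * x j) \<ge> 0)"

definition lovasz_theta :: "'a set \<Rightarrow> ('a \<Rightarrow> 'a \<Rightarrow> bool) \<Rightarrow> real" where
  "lovasz_theta V E = Sup {(\<Sum>i\<in>V. \<Sum>j\<in>V. B i j) | B.
      psd_on V B \<and> (\<Sum>i\<in>V. B i i) = 1 \<and> (\<forall>i\<in>V. \<forall>j\<in>V. E i j \<longrightarrow> B i j = 0)}"

definition transversal_design :: "nat \<Rightarrow> nat \<Rightarrow> 'p set \<Rightarrow> 'p set set \<Rightarrow> 'p set set \<Rightarrow> bool" where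
  "transversal_design m n X Gs Bs \<longleftrightarrow>
     m \<ge> 2 \<and> n \<ge> 1 \<and> finite X \<and> card X = m * n \<and>
     partition_on X Gs \<and> card Gs = m \<and> (\<forall>G\<in>Gs. card G = n) \<and>
     (\<forall>B\<in>Bs. B \<subseteq> X \<and> (\<forall>G\<in>Gs. card (B \<inter> G) = 1)) \<and>
     (\<forall>x\<in>X. \<forall>y\<in>X. (\<not> (\<exists>G\<in>Gs. x \<in> G \<and> y \<in> G)) \<longrightarrow> (\<exists>!B. B \<in> Bs \<and> x \<in> B \<and> y \<in> B))"

definition LSG_adj :: "'p set \<Rightarrow> 'p set \<Rightarrow> bool" where
  "LSG_adj B B' \<longleftrightarrow> B \<noteq> B' \<and> card (B \<inter> B') = 1"

end

theory Submission
  imports Defs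
begin

text \<open>The \<open>n\<close> blocks through a point pairwise meet, so they form an independent set of the
  complement \<open>H\<close> of the Latin square graph, and this persists in the strong powers:
  \<open>n \<le> \<alpha>(H) \<le> \<Theta>(H)\<close> and \<open>n \<le> \<vartheta>(H)\<close>. Conversely, with \<open>C\<close> the block intersection matrix,
  the identity \<open>C\<^sup>2 = n C + m (m - 1) J\<close> makes the projection \<open>P\<close> onto the kernel of \<open>C\<close>
  explicit, and \<open>J/n + n/(n + 1 - m) P\<close> turns out to be the Gram matrix of an orthonormal
  representation of \<open>H\<close> in Lovasz's sense with handle value \<open>1/n\<close>. Hence \<open>\<vartheta>(H) \<le> n\<close>, and
  since orthonormal representations tensorise, also \<open>\<alpha>(H\<^sup>k) \<le> n\<^sup>k\<close> for the strong powers.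
  This needs only \<open>m \<le> n\<close>.\<close>

definition theta_feasible :: "'a set \<Rightarrow> ('a \<Rightarrow> 'a \<Rightarrow> bool) \<Rightarrow> ('a \<Rightarrow> 'a \<Rightarrow> real) \<Rightarrow> bool" where
  "theta_feasible V E B \<longleftrightarrow>
     psd_on V B \<and> (\<Sum>i\<in>V. B i i) = 1 \<and> (\<forall>i\<in>V. \<forall>j\<in>V. E i j \<longrightarrow> B i j = 0)"

lemma lovasz_theta_eq_Sup_feasible:
  "lovasz_theta V E = Sup {(\<Sum>i\<in>V. \<Sum>j\<in>V. B i j) | B. theta_feasible V E B}"
  unfolding lovasz_theta_def theta_feasible_def by simp

text \<open>Lovasz's orthonormal representations (orthogonal for non-adjacent vertices), with vectors
  in \<open>\<real>\<^sup>R\<close> under the inner product weighted by \<open>w \<ge> 0\<close>, which avoids square roots.\<close>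

definition orthonormal_representation ::
    "'a set \<Rightarrow> ('a \<Rightarrow> 'a \<Rightarrow> bool) \<Rightarrow> 'r set \<Rightarrow> ('r \<Rightarrow> real) \<Rightarrow> ('a \<Rightarrow> 'r \<Rightarrow> real) \<Rightarrow> bool" where
  "orthonormal_representation V E R w u \<longleftrightarrow>
     finite R \<and> (\<forall>r\<in>R. 0 \<le> w r) \<and>
     (\<forall>i\<in>V. (\<Sum>r\<in>R. w r * u i r * u i r) = 1) \<and>
     (\<forall>i\<in>V. \<forall>j\<in>V. i \<noteq> j \<and> \<not> E i j \<longrightarrow> (\<Sum>r\<in>R. w r * u i r * u j r) = 0)"

text \<open>Lovasz's bound \<open>\<vartheta> \<le> 1 / w r\<^sub>0\<close> for the handle along coordinate \<open>r\<^sub>0\<close>: pairing a feasible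
  \<open>B\<close> with the Gram matrix of the representation gives the trace of \<open>B\<close>, and this pairing
  dominates its \<open>r\<^sub>0\<close>-term, which is \<open>w r\<^sub>0\<close> times the sum of \<open>B\<close>.\<close>

lemma theta_feasible_sum_le_handle:
  assumes rep: "orthonormal_representation V E R w u"
    and r0: "r0 \<in> R" "\<And>i. i \<in> V \<Longrightarrow> u i r0 = 1"
    and B: "theta_feasible V E B"
  shows "w r0 * (\<Sum>i\<in>V. \<Sum>j\<in>V. B i j) \<le> 1"
proof -
  have finR: "finite R" and w: "\<And>r. r \<in> R \<Longrightarrow> 0 \<le> w r"
    using rep unfolding orthonormal_representation_def by auto
  have psd: "\<And>x. 0 \<le> (\<Sum>i\<in>V. \<Sum>j\<in>V. x i * B i j * x j)"
    using B unfolding theta_feasible_def psd_on_def by blast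
  have finV: "finite V"
    using B unfolding theta_feasible_def by (metis sum.infinite zero_neq_one)
  define Q where "Q r = (\<Sum>i\<in>V. \<Sum>j\<in>V. u i r * B i j * u j r)" for r
  have "(\<Sum>i\<in>V. \<Sum>j\<in>V. B i j * (\<Sum>r\<in>R. w r * u i r * u j r)) = (\<Sum>i\<in>V. B i i)"
  proof -
    have "B i j * (\<Sum>r\<in>R. w r * u i r * u j r) = (if i = j then B i i else 0)"
      if "i \<in> V" "j \<in> V" for i j
      using rep B that unfolding orthonormal_representation_def theta_feasible_def
      by (cases "E i j") auto
    then show ?thesis using finV by (simp cong: sum.cong)
  qed
  also have "\<dots> = 1" using B unfolding theta_feasible_def by simp
  finally have "1 = (\<Sum>r\<in>R. w r * Q r)"
    unfolding Q_def by (simp add: sum_distrib_left sum_distrib_right mult_ac sum.swap[of _ R])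
  also have "\<dots> \<ge> w r0 * Q r0"
    using finR r0(1) w psd unfolding Q_def
    by (intro member_le_sum mult_nonneg_nonneg) auto
  also have "Q r0 = (\<Sum>i\<in>V. \<Sum>j\<in>V. B i j)"
    unfolding Q_def using r0(2) by (simp cong: sum.cong)
  finally show ?thesis .
qed

lemma theta_feasible_independent_set:
  assumes "finite V" and S: "independent_set V E S" "S \<noteq> {}"
  defines "B \<equiv> \<lambda>i j. if i \<in> S \<and> j \<in> S then 1 / real (card S) else 0"
  shows "theta_feasible V E B" and "(\<Sum>i\<in>V. \<Sum>j\<in>V. B i j) = real (card S)"
proof -
  have SV: "S \<subseteq> V" and ind: "\<And>i j. i \<in> S \<Longrightarrow> j \<in> S \<Longrightarrow> \<not> E i j"
    using S unfolding independent_set_def by auto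
  have finS: "finite S" using assms(1) SV finite_subset by blast
  have cpos: "real (card S) > 0" using finS S(2) by (simp add: card_gt_0_iff)
  have restrict: "(\<Sum>i\<in>V. if i \<in> S then f i else 0) = (\<Sum>i\<in>S. f i)" for f :: "'a \<Rightarrow> real"
    using sum.inter_restrict[OF assms(1), of f S] SV by (simp add: Int_absorb1)
  have quad: "(\<Sum>i\<in>V. \<Sum>j\<in>V. x i * B i j * x j) = (\<Sum>i\<in>S. x i) * (\<Sum>j\<in>S. x j) / real (card S)"
    for x
  proof -
    have "(\<Sum>i\<in>V. \<Sum>j\<in>V. x i * B i j * x j)
        = (\<Sum>i\<in>V. if i \<in> S then (\<Sum>j\<in>V. if j \<in> S then x i * x j / real (card S) else 0) else 0)"
      unfolding B_def by (auto intro!: sum.cong)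
    also have "\<dots> = (\<Sum>i\<in>S. \<Sum>j\<in>S. x i * x j / real (card S))" by (simp add: restrict)
    finally show ?thesis by (simp add: sum_product sum_divide_distrib)
  qed
  show "theta_feasible V E B"
    unfolding theta_feasible_def psd_on_def
  proof (intro conjI ballI allI impI)
    show "0 \<le> (\<Sum>i\<in>V. \<Sum>j\<in>V. x i * B i j * x j)" for x
      unfolding quad using cpos by simp
    show "(\<Sum>i\<in>V. B i i) = 1"
      using cpos unfolding B_def by (simp add: restrict)
  qed (auto simp: B_def ind)
  show "(\<Sum>i\<in>V. \<Sum>j\<in>V. B i j) = real (card S)"
    using quad[of "\<lambda>_. 1"] cpos by simp
qed

lemma independence_number_eqI:
  assumes "finite V" "independent_set V E S"
    and "\<And>T. independent_set V E T \<Longrightarrow> card T \<le> card S"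
  shows "independence_number V E = card S"
  unfolding independence_number_def
proof (rule Max_eqI)
  show "finite {card T |T. independent_set V E T}"
    by (rule finite_subset[of _ "card ` Pow V"]) (auto simp: independent_set_def assms(1))
qed (use assms in auto)

lemma lovasz_theta_eqI:
  assumes "theta_feasible V E B" "(\<Sum>i\<in>V. \<Sum>j\<in>V. B i j) = t"
    and "\<And>B'. theta_feasible V E B' \<Longrightarrow> (\<Sum>i\<in>V. \<Sum>j\<in>V. B' i j) \<le> t"
  shows "lovasz_theta V E = t"
  unfolding lovasz_theta_eq_Sup_feasible
  by (rule cSup_eq_maximum) (use assms in auto)

lemma independence_number_lovasz_theta_eq_handle_bound:
  assumes "finite V" and rep: "orthonormal_representation V E R w u"
    and r0: "r0 \<in> R" "\<And>i. i \<in> V \<Longrightarrow> u i r0 = 1"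
    and S: "independent_set V E S" and handle: "w r0 * card S = 1"
  shows "independence_number V E = card S" and "lovasz_theta V E = card S"
proof -
  have wpos: "w r0 > 0"
    using handle rep r0(1) unfolding orthonormal_representation_def
    by (metis less_eq_real_def mult_zero_left zero_neq_one)
  have theta_le: "(\<Sum>i\<in>V. \<Sum>j\<in>V. B i j) \<le> card S" if "theta_feasible V E B" for B
    using theta_feasible_sum_le_handle[OF rep r0 that] handle wpos
    by (simp add: field_simps) (metis mult_le_cancel_left_pos)
  show "independence_number V E = card S"
  proof (rule independence_number_eqI[OF assms(1) S])
    fix T assume T: "independent_set V E T"
    show "card T \<le> card S"
    proof (cases "T = {}")
      case False
      from theta_feasible_independent_set[OF assms(1) T False] theta_le show ?thesis
        by (metis of_nat_le_iff)
    qed simp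
  qed
  have "S \<noteq> {}" using handle by auto
  from theta_feasible_independent_set[OF assms(1) S this] theta_le
  show "lovasz_theta V E = card S" by (intro lovasz_theta_eqI) auto
qed

lemma orthonormal_representation_strong_power:
  assumes rep: "orthonormal_representation V E R w u"
  shows "orthonormal_representation (strong_power_vertices V k) (strong_power_adj E k)
           (PiE {..<k} (\<lambda>_. R)) (\<lambda>\<rho>. \<Prod>i<k. w (\<rho> i)) (\<lambda>f \<rho>. \<Prod>i<k. u (f i) (\<rho> i))"
proof -
  have finR: "finite R" and w: "\<And>r. r \<in> R \<Longrightarrow> 0 \<le> w r"
    using rep unfolding orthonormal_representation_def by auto
  have inner: "(\<Sum>\<rho>\<in>PiE {..<k} (\<lambda>_. R).
        (\<Prod>i<k. w (\<rho> i)) * (\<Prod>i<k. u (f i) (\<rho> i)) * (\<Prod>i<k. u (g i) (\<rho> i)))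
      = (\<Prod>i<k. \<Sum>r\<in>R. w r * u (f i) r * u (g i) r)" for f g
    by (subst prod_sum_PiE) (simp_all add: finR prod.distrib)
  show ?thesis
    unfolding orthonormal_representation_def
  proof (intro conjI ballI impI)
    show "finite (PiE {..<k} (\<lambda>_. R))" using finR by (simp add: finite_PiE)
    show "0 \<le> (\<Prod>i<k. w (\<rho> i))" if "\<rho> \<in> PiE {..<k} (\<lambda>_. R)" for \<rho>
      using that w by (auto intro!: prod_nonneg simp: PiE_iff)
  next
    fix f assume "f \<in> strong_power_vertices V k"
    then show "(\<Sum>\<rho>\<in>PiE {..<k} (\<lambda>_. R).
        (\<Prod>i<k. w (\<rho> i)) * (\<Prod>i<k. u (f i) (\<rho> i)) * (\<Prod>i<k. u (f i) (\<rho> i))) = 1"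
      using rep unfolding inner orthonormal_representation_def strong_power_vertices_def
      by (auto intro!: prod.neutral simp: PiE_iff)
  next
    fix f g assume fg: "f \<in> strong_power_vertices V k" "g \<in> strong_power_vertices V k"
      and "f \<noteq> g \<and> \<not> strong_power_adj E k f g"
    then obtain i where i: "i < k" "f i \<noteq> g i" "\<not> E (f i) (g i)"
      unfolding strong_power_adj_def by auto
    have "(\<Sum>r\<in>R. w r * u (f i) r * u (g i) r) = 0"
      using rep fg i unfolding orthonormal_representation_def strong_power_vertices_def
      by (auto simp: PiE_iff)
    then show "(\<Sum>\<rho>\<in>PiE {..<k} (\<lambda>_. R).
        (\<Prod>i<k. w (\<rho> i)) * (\<Prod>i<k. u (f i) (\<rho> i)) * (\<Prod>i<k. u (g i) (\<rho> i))) = 0"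
      unfolding inner using i(1) by (intro prod_zero) auto
  qed
qed

lemma independent_set_strong_power:
  assumes "independent_set V E S"
  shows "independent_set (strong_power_vertices V k) (strong_power_adj E k) (PiE {..<k} (\<lambda>_. S))"
  using assms unfolding independent_set_def strong_power_vertices_def strong_power_adj_def
  by (auto simp: PiE_iff extensional_def intro: PiE_mono) (metis ext)

lemma shannon_capacity_eq_handle_bound:
  assumes "finite V" and rep: "orthonormal_representation V E R w u"
    and r0: "r0 \<in> R" "\<And>i. i \<in> V \<Longrightarrow> u i r0 = 1"
    and S: "independent_set V E S" and handle: "w r0 * card S = 1"
  shows "shannon_capacity V E = card S"
proof -
  have power: "independence_number (strong_power_vertices V k) (strong_power_adj E k) = card S ^ k"
    for k
  proof -
    let ?\<rho>0 = "restrict (\<lambda>_. r0) {..<k}"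
    have "card (PiE {..<k} (\<lambda>_. S)) = card S ^ k" by (simp add: card_PiE)
    moreover have "(\<Prod>i<k. w (?\<rho>0 i)) * card S ^ k = 1"
      using handle by (simp flip: power_mult_distrib)
    ultimately show ?thesis
      using independence_number_lovasz_theta_eq_handle_bound(1)[OF _
          orthonormal_representation_strong_power[OF rep] _ _ independent_set_strong_power[OF S],
          of k ?\<rho>0] assms(1) r0
      by (simp add: strong_power_vertices_def finite_PiE PiE_iff)
  qed
  have "(\<lambda>k. root k (real (card S ^ k))) ` {1..} = (\<lambda>_::nat. real (card S)) ` {1..}"
    by (rule image_cong) (auto simp: real_root_power_cancel)
  then show ?thesis
    unfolding shannon_capacity_def power by simp
qed

lemma card_filter_eq_sum: "finite A \<Longrightarrow> card {x\<in>A. P x} = (\<Sum>x\<in>A. if P x then 1 else (0::nat))"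
  using sum.inter_filter[of A "\<lambda>_. 1::nat" P] by simp

lemma sum_card_Int_eq_sum_card_containing:
  assumes "finite Bs" "finite A"
  shows "(\<Sum>B\<in>Bs. card (B \<inter> A)) = (\<Sum>p\<in>A. card {B\<in>Bs. p \<in> B})"
proof -
  have "card (B \<inter> A) = (\<Sum>p\<in>A. if p \<in> B then 1 else 0)" for B
    using assms(2) card_filter_eq_sum[of A "\<lambda>p. p \<in> B"] by (simp add: Int_def conj_commute)
  then have "(\<Sum>B\<in>Bs. card (B \<inter> A)) = (\<Sum>p\<in>A. \<Sum>B\<in>Bs. if p \<in> B then 1 else 0)"
    by (simp add: sum.swap[of _ Bs])
  also have "\<dots> = (\<Sum>p\<in>A. card {B\<in>Bs. p \<in> B})"
    using assms(1) by (simp add: card_filter_eq_sum)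
  finally show ?thesis .
qed

lemma sum_card_Int_mult_eq_sum_card_containing:
  assumes "finite Bs" "finite A" "finite C"
  shows "(\<Sum>B\<in>Bs. card (A \<inter> B) * card (B \<inter> C)) = (\<Sum>p\<in>A. \<Sum>q\<in>C. card {B\<in>Bs. p \<in> B \<and> q \<in> B})"
proof -
  have "card (A \<inter> B) * card (B \<inter> C) = (\<Sum>p\<in>A. \<Sum>q\<in>C. if p \<in> B \<and> q \<in> B then 1 else 0)" for B
  proof -
    have "card (A \<inter> B) * card (B \<inter> C)
        = (\<Sum>p\<in>A. if p \<in> B then 1 else 0) * (\<Sum>q\<in>C. if q \<in> B then 1 else 0)"
      using assms card_filter_eq_sum[of A "\<lambda>p. p \<in> B"] card_filter_eq_sum[of C "\<lambda>q. q \<in> B"]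
      by (simp add: Int_def conj_commute)
    also have "\<dots> = (\<Sum>p\<in>A. \<Sum>q\<in>C. if p \<in> B \<and> q \<in> B then 1 else 0)"
      unfolding sum_product by (intro sum.cong refl) auto
    finally show ?thesis .
  qed
  then have "(\<Sum>B\<in>Bs. card (A \<inter> B) * card (B \<inter> C))
      = (\<Sum>p\<in>A. \<Sum>B\<in>Bs. \<Sum>q\<in>C. if p \<in> B \<and> q \<in> B then 1 else 0)"
    by (simp add: sum.swap[of _ Bs])
  also have "\<dots> = (\<Sum>p\<in>A. \<Sum>q\<in>C. \<Sum>B\<in>Bs. if p \<in> B \<and> q \<in> B then 1 else 0)"
    by (intro sum.cong refl sum.swap)
  also have "\<dots> = (\<Sum>p\<in>A. \<Sum>q\<in>C. card {B\<in>Bs. p \<in> B \<and> q \<in> B})"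
    using assms(1) by (simp add: card_filter_eq_sum)
  finally show ?thesis .
qed

lemma complement_LSG_adj_iff:
  "complement_graph LSG_adj B B' \<longleftrightarrow> B \<noteq> B' \<and> card (B \<inter> B') \<noteq> 1"
  unfolding complement_graph_def LSG_adj_def by auto

locale transversal_2_design =
  fixes m n :: nat and X :: "'p set" and Gs Bs :: "'p set set"
  assumes design: "transversal_design m n X Gs Bs"
begin

lemma m_ge_2: "m \<ge> 2" and n_pos: "n \<ge> 1" and finite_points: "finite X"
  and card_points: "card X = m * n" and groups_partition: "partition_on X Gs"
  and card_groups: "card Gs = m" and card_group: "\<And>G. G \<in> Gs \<Longrightarrow> card G = n"
  and block_subset: "\<And>B. B \<in> Bs \<Longrightarrow> B \<subseteq> X"
  and card_block_Int_group: "\<And>B G. B \<in> Bs \<Longrightarrow> G \<in> Gs \<Longrightarrow> card (B \<inter> G) = 1"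
  and pair_in_unique_block: "\<And>p q. p \<in> X \<Longrightarrow> q \<in> X \<Longrightarrow> \<not> (\<exists>G\<in>Gs. p \<in> G \<and> q \<in> G)
      \<Longrightarrow> \<exists>!B. B \<in> Bs \<and> p \<in> B \<and> q \<in> B"
  using design unfolding transversal_design_def by auto

lemma finite_groups: "finite Gs"
  using card_groups m_ge_2 card.infinite by fastforce

lemma finite_blocks: "finite Bs"
  using finite_points block_subset by (meson Pow_iff finite_Pow_iff finite_subset subsetI)

lemma finite_block: "B \<in> Bs \<Longrightarrow> finite B"
  using finite_points block_subset finite_subset by blast

lemma group_subset: "G \<in> Gs \<Longrightarrow> G \<subseteq> X"
  using groups_partition unfolding partition_on_def by auto

lemma point_in_group: "p \<in> X \<Longrightarrow> \<exists>G\<in>Gs. p \<in> G"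
  using groups_partition unfolding partition_on_def by auto

lemma group_unique: "G \<in> Gs \<Longrightarrow> G' \<in> Gs \<Longrightarrow> p \<in> G \<Longrightarrow> p \<in> G' \<Longrightarrow> G = G'"
  using groups_partition unfolding partition_on_def disjoint_def by blast

lemma block_Int_group:
  assumes "B \<in> Bs" "G \<in> Gs" obtains q where "B \<inter> G = {q}"
  using card_block_Int_group[OF assms] by (metis card_1_singletonE)

lemma card_block: assumes "B \<in> Bs" shows "card B = m"
proof -
  have "card B = card (\<Union>G\<in>Gs. B \<inter> G)"
    using block_subset[OF assms] groups_partition unfolding partition_on_def
    by (simp add: Int_absorb2 flip: Int_Union)
  also have "\<dots> = (\<Sum>G\<in>Gs. card (B \<inter> G))"
    using finite_groups finite_block[OF assms]
    by (intro card_UN_disjoint) (auto dest: group_unique)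
  also have "\<dots> = m" using assms card_groups by (simp add: card_block_Int_group)
  finally show ?thesis .
qed

lemma block_meets_group_once:
  "B \<in> Bs \<Longrightarrow> G \<in> Gs \<Longrightarrow> p \<in> B \<inter> G \<Longrightarrow> q \<in> B \<inter> G \<Longrightarrow> p = q"
  by (metis block_Int_group singletonD)

lemma blocks_through_same_group:
  assumes "G \<in> Gs" "p \<in> G" "q \<in> G" "p \<noteq> q"
  shows "{B\<in>Bs. p \<in> B \<and> q \<in> B} = {}"
  using assms block_meets_group_once by blast

lemma card_blocks_through_pair:
  assumes "p \<in> X" "q \<in> X" "\<not> (\<exists>G\<in>Gs. p \<in> G \<and> q \<in> G)"
  shows "card {B\<in>Bs. p \<in> B \<and> q \<in> B} = 1"
proof -
  obtain B0 where "{B\<in>Bs. p \<in> B \<and> q \<in> B} = {B0}"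
    using pair_in_unique_block[OF assms] by auto
  then show ?thesis by simp
qed

lemma card_blocks_through_point:
  assumes p: "p \<in> X"
  shows "card {B\<in>Bs. p \<in> B} = n"
proof -
  obtain Gp where Gp: "Gp \<in> Gs" "p \<in> Gp" using point_in_group[OF p] by blast
  have "Gs \<noteq> {Gp}" using card_groups m_ge_2 by auto
  then obtain G where G: "G \<in> Gs" "p \<notin> G" using Gp group_unique by blast
  define block where "block q = (THE B. B \<in> Bs \<and> p \<in> B \<and> q \<in> B)" for q
  have unique: "\<exists>!B. B \<in> Bs \<and> p \<in> B \<and> q \<in> B" if q: "q \<in> G" for q
  proof (rule pair_in_unique_block[OF p])
    show "q \<in> X" using group_subset G(1) q by blast
    show "\<not> (\<exists>G'\<in>Gs. p \<in> G' \<and> q \<in> G')" using G q group_unique by metis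
  qed
  have block: "block q \<in> Bs \<and> p \<in> block q \<and> q \<in> block q" if "q \<in> G" for q
    unfolding block_def using theI'[OF unique[OF that]] .
  have "bij_betw block G {B\<in>Bs. p \<in> B}"
  proof (rule bij_betw_imageI)
    show "inj_on block G"
    proof (rule inj_onI)
      fix q q' assume "q \<in> G" "q' \<in> G" "block q = block q'"
      then show "q = q'" using block block_meets_group_once[OF _ G(1)] by (metis IntI)
    qed
    show "block ` G = {B\<in>Bs. p \<in> B}"
    proof (intro equalityI subsetI)
      fix B assume B: "B \<in> {B\<in>Bs. p \<in> B}"
      then obtain q where "B \<inter> G = {q}" using block_Int_group G(1) by blast
      then have "q \<in> G" "block q = B"
        unfolding block_def using B unique by (auto intro!: the1_equality)
      then show "B \<in> block ` G" by blast
    qed (use block in auto)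
  qed
  then show ?thesis using card_group[OF G(1)] by (simp add: bij_betw_same_card)
qed

lemma card_Int_blocks_le_1:
  assumes "B \<in> Bs" "B' \<in> Bs" "B \<noteq> B'"
  shows "card (B \<inter> B') \<le> 1"
proof -
  have "p = q" if pq: "p \<in> B \<inter> B'" "q \<in> B \<inter> B'" for p q
  proof (rule ccontr)
    assume "p \<noteq> q"
    show False
    proof (cases "\<exists>G\<in>Gs. p \<in> G \<and> q \<in> G")
      case True
      then show False using blocks_through_same_group pq assms \<open>p \<noteq> q\<close> by blast
    next
      case False
      moreover have "p \<in> X" "q \<in> X" using pq assms(1) block_subset by auto
      ultimately show False using pair_in_unique_block[of p q] pq assms by blast
    qed
  qed
  then show ?thesis
    using finite_block assms by (simp add: card_le_Suc0_iff_eq)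
qed

lemma sum_card_Int_block:
  assumes "B \<in> Bs"
  shows "(\<Sum>B'\<in>Bs. real (card (B' \<inter> B))) = real m * real n"
proof -
  have "(\<Sum>B'\<in>Bs. card (B' \<inter> B)) = (\<Sum>p\<in>B. card {B'\<in>Bs. p \<in> B'})"
    using sum_card_Int_eq_sum_card_containing finite_blocks finite_block assms by blast
  also have "\<dots> = (\<Sum>p\<in>B. n)"
    using assms block_subset by (intro sum.cong refl card_blocks_through_point) auto
  finally show ?thesis using card_block[OF assms] by (simp flip: of_nat_sum)
qed

lemma card_blocks: "card Bs = n\<^sup>2"
proof -
  have "card Bs * m = (\<Sum>B\<in>Bs. card (B \<inter> X))"
    using block_subset card_block by (simp add: Int_absorb2)
  also have "\<dots> = (\<Sum>p\<in>X. card {B\<in>Bs. p \<in> B})"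
    using sum_card_Int_eq_sum_card_containing finite_blocks finite_points by blast
  also have "\<dots> = m * n * n"
    using card_points by (simp add: card_blocks_through_point)
  finally show ?thesis using m_ge_2 by (simp add: power2_eq_square)
qed

lemma sum_card_blocks_through_pair:
  assumes "p \<in> X" "B' \<in> Bs"
  shows "(\<Sum>q\<in>B'. card {B\<in>Bs. p \<in> B \<and> q \<in> B}) = (m - 1) + (if p \<in> B' then n else 0)"
proof -
  obtain Gp where Gp: "Gp \<in> Gs" "p \<in> Gp" using point_in_group[OF assms(1)] by blast
  obtain q0 where q0: "B' \<inter> Gp = {q0}" using block_Int_group assms(2) Gp(1) by blast
  have q0B: "q0 \<in> B'" and fin: "finite B'" using q0 finite_block assms by auto
  have "(\<Sum>q\<in>B'. card {B\<in>Bs. p \<in> B \<and> q \<in> B})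
      = card {B\<in>Bs. p \<in> B \<and> q0 \<in> B} + (\<Sum>q\<in>B'-{q0}. card {B\<in>Bs. p \<in> B \<and> q \<in> B})"
    using fin q0B by (simp add: sum.remove)
  also have "(\<Sum>q\<in>B'-{q0}. card {B\<in>Bs. p \<in> B \<and> q \<in> B}) = (\<Sum>q\<in>B'-{q0}. 1)"
  proof (intro sum.cong refl card_blocks_through_pair assms(1))
    fix q assume q: "q \<in> B' - {q0}"
    then show "q \<in> X" using block_subset assms by auto
    have "q \<notin> Gp" using q q0 by auto
    then show "\<not> (\<exists>G\<in>Gs. p \<in> G \<and> q \<in> G)" using Gp group_unique by metis
  qed
  also have "\<dots> = m - 1" using card_block[OF assms(2)] fin q0B by simp
  also have "card {B\<in>Bs. p \<in> B \<and> q0 \<in> B} = (if p \<in> B' then n else 0)"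
  proof (cases "p = q0")
    case True
    then show ?thesis using card_blocks_through_point[OF assms(1)] q0B by simp
  next
    case False
    have "q0 \<in> Gp" using q0 by auto
    then have "{B\<in>Bs. p \<in> B \<and> q0 \<in> B} = {}" using blocks_through_same_group[OF Gp] False by blast
    moreover have "p \<notin> B'" using False q0 Gp by auto
    ultimately show ?thesis by (metis card.empty)
  qed
  finally show ?thesis by simp
qed

lemma sum_card_Int_mult:
  assumes "B \<in> Bs" "B' \<in> Bs"
  shows "(\<Sum>B''\<in>Bs. real (card (B \<inter> B'')) * real (card (B'' \<inter> B')))
    = real n * real (card (B \<inter> B')) + real m * (real m - 1)"
proof -
  have "(\<Sum>B''\<in>Bs. card (B \<inter> B'') * card (B'' \<inter> B'))
      = (\<Sum>p\<in>B. \<Sum>q\<in>B'. card {B''\<in>Bs. p \<in> B'' \<and> q \<in> B''})"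
    using sum_card_Int_mult_eq_sum_card_containing finite_blocks finite_block assms by blast
  also have "\<dots> = (\<Sum>p\<in>B. (m - 1) + (if p \<in> B' then n else 0))"
    using assms block_subset by (intro sum.cong refl sum_card_blocks_through_pair) auto
  also have "\<dots> = m * (m - 1) + n * card (B \<inter> B')"
    using finite_block[OF assms(1)] card_block[OF assms(1)]
    by (simp add: sum.distrib sum.If_cases Int_def)
  finally have "real (\<Sum>B''\<in>Bs. card (B \<inter> B'') * card (B'' \<inter> B'))
      = real (m * (m - 1) + n * card (B \<inter> B'))" by (rule arg_cong)
  then show ?thesis using m_ge_2 by simp
qed

text \<open>The orthogonal projection onto the kernel of \<open>C = (card (B \<inter> B'))\<^sub>B\<^sub>,\<^sub>B\<^sub>'\<close>; it is
  idempotent because \<open>C\<^sup>2 = n C + m (m - 1) J\<close>, \<open>C J = m n J\<close> and \<open>J\<^sup>2 = n\<^sup>2 J\<close>.\<close>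

definition block_proj :: "'p set \<Rightarrow> 'p set \<Rightarrow> real" where
  "block_proj B B' = of_bool (B = B') + (real m - 1) / (real n)\<^sup>2 - real (card (B \<inter> B')) / real n"

lemma block_proj_idem:
  assumes i: "i \<in> Bs" and j: "j \<in> Bs"
  shows "(\<Sum>r\<in>Bs. block_proj r i * block_proj r j) = block_proj i j"
proof -
  define e where "e = (real m - 1) / (real n)\<^sup>2"
  define c :: "'p set \<Rightarrow> 'p set \<Rightarrow> real" where "c B B' = real (card (B \<inter> B'))" for B B'
  define \<delta> :: "'p set \<Rightarrow> 'p set \<Rightarrow> real" where "\<delta> B B' = of_bool (B = B')" for B B'
  have proj: "block_proj B B' = \<delta> B B' + (e - c B B' / real n)" for B B'
    unfolding block_proj_def \<delta>_def e_def c_def by simp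
  have n: "real n > 0" using n_pos by simp
  have c_sym: "c B B' = c B' B" for B B' unfolding c_def by (simp add: Int_commute)
  have e: "e + (real n)\<^sup>2 * e\<^sup>2 - 2 * e * real m + real m * (real m - 1) / (real n)\<^sup>2 = 0"
    unfolding e_def using n by (simp add: field_simps power2_eq_square)
  have "(\<Sum>r\<in>Bs. block_proj r i * block_proj r j)
     = (\<Sum>r\<in>Bs. \<delta> r i * \<delta> r j) + (\<Sum>r\<in>Bs. \<delta> r i * (e - c r j / real n))
       + (\<Sum>r\<in>Bs. (e - c r i / real n) * \<delta> r j)
       + (\<Sum>r\<in>Bs. (e - c r i / real n) * (e - c r j / real n))"
    unfolding proj by (simp only: distrib_left distrib_right sum.distrib add.assoc)
  also have "(\<Sum>r\<in>Bs. \<delta> r i * \<delta> r j) = \<delta> i j"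
    using i finite_blocks by (simp add: \<delta>_def)
  also have "(\<Sum>r\<in>Bs. \<delta> r i * (e - c r j / real n)) = e - c i j / real n"
    using i finite_blocks by (simp add: \<delta>_def)
  also have "(\<Sum>r\<in>Bs. (e - c r i / real n) * \<delta> r j) = e - c i j / real n"
    using j finite_blocks by (simp add: \<delta>_def c_sym)
  also have "(\<Sum>r\<in>Bs. (e - c r i / real n) * (e - c r j / real n))
      = (\<Sum>r\<in>Bs. e\<^sup>2 - e / real n * c r i - e / real n * c r j + c i r * c r j / (real n)\<^sup>2)"
    using n by (intro sum.cong refl) (simp add: c_sym[of _ i] field_simps power2_eq_square)
  also have "\<dots> = real (card Bs) * e\<^sup>2 - e / real n * (\<Sum>r\<in>Bs. c r i) - e / real n * (\<Sum>r\<in>Bs. c r j)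
        + (\<Sum>r\<in>Bs. c i r * c r j) / (real n)\<^sup>2"
    by (simp add: sum.distrib sum_subtractf sum_distrib_left sum_divide_distrib)
  also have "\<dots> = (real n)\<^sup>2 * e\<^sup>2 - 2 * e * real m + c i j / real n
      + real m * (real m - 1) / (real n)\<^sup>2"
    using n unfolding c_def
    by (simp add: card_blocks sum_card_Int_block i j sum_card_Int_mult add_divide_distrib
        power2_eq_square)
  finally show ?thesis
    unfolding proj using e by (simp add: algebra_simps)
qed
text \<open>The coordinates are a constant one of weight \<open>1/n\<close> and the rows of \<open>P = block_proj\<close>
  with weight \<open>n / (n + 1 - m)\<close>, so the Gram matrix is \<open>J/n + n/(n + 1 - m) P\<close>; the
  second weight is the one making the diagonal 1.\<close>

lemma complement_LSG_orthonormal_representation: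
  assumes "m \<le> n"
  shows "\<exists>(R :: 'p set option set) w u r0.
    orthonormal_representation Bs (complement_graph LSG_adj) R w u \<and> r0 \<in> R
    \<and> (\<forall>B\<in>Bs. u B r0 = 1) \<and> w r0 = 1 / real n"
proof -
  define d where "d = real n + 1 - real m"
  define R where "R = insert None (Some ` Bs)"
  define w where "w r = (case r of None \<Rightarrow> 1 / real n | Some _ \<Rightarrow> real n / d)"
    for r :: "'p set option"
  define u where "u B r = (case r of None \<Rightarrow> 1 | Some B' \<Rightarrow> block_proj B' B)"
    for B and r :: "'p set option"
  have n: "real n > 0" and d: "d > 0" using n_pos assms unfolding d_def by auto
  have gram: "(\<Sum>r\<in>R. w r * u i r * u j r) = 1 / real n + real n / d * block_proj i j"
    if "i \<in> Bs" "j \<in> Bs" for i j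
  proof -
    have "(\<Sum>r\<in>R. w r * u i r * u j r)
        = 1 / real n + (\<Sum>r\<in>Bs. real n / d * (block_proj r i * block_proj r j))"
      unfolding R_def using finite_blocks by (simp add: sum.reindex w_def u_def mult.assoc)
    also have "\<dots> = 1 / real n + real n / d * block_proj i j"
      by (simp only: block_proj_idem[OF that] flip: sum_distrib_left)
    finally show ?thesis .
  qed
  have "orthonormal_representation Bs (complement_graph LSG_adj) R w u"
    unfolding orthonormal_representation_def
  proof (intro conjI ballI impI)
    show "finite R" unfolding R_def using finite_blocks by simp
    show "0 \<le> w r" for r unfolding w_def using n d by (cases r) auto
    show "(\<Sum>r\<in>R. w r * u i r * u i r) = 1" if "i \<in> Bs" for i
    proof -
      have "block_proj i i = (real n - 1) * d / (real n)\<^sup>2"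
        unfolding block_proj_def d_def using card_block[OF that] n
        by (simp add: field_simps power2_eq_square)
      then show ?thesis
        unfolding gram[OF that that] using n d by (simp add: field_simps power2_eq_square)
    qed
    show "(\<Sum>r\<in>R. w r * u i r * u j r) = 0"
      if "i \<in> Bs" "j \<in> Bs" "i \<noteq> j \<and> \<not> complement_graph LSG_adj i j" for i j
    proof -
      have "i \<noteq> j" "card (i \<inter> j) = 1"
        using that(3) unfolding complement_LSG_adj_iff by auto
      then have "block_proj i j = - d / (real n)\<^sup>2"
        unfolding block_proj_def d_def using n by (simp add: field_simps power2_eq_square)
      then show ?thesis
        unfolding gram[OF that(1,2)] using n d by (simp add: field_simps power2_eq_square)
    qed
  qed
  moreover have "None \<in> R" "\<forall>B\<in>Bs. u B None = 1" "w None = 1 / real n"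
    unfolding R_def u_def w_def by simp_all
  ultimately show ?thesis by blast
qed

lemma independent_blocks_through_point:
  assumes "p \<in> X"
  shows "independent_set Bs (complement_graph LSG_adj) {B\<in>Bs. p \<in> B}"
proof -
  have "card (B \<inter> B') = 1" if "B \<in> Bs" "B' \<in> Bs" "B \<noteq> B'" "p \<in> B" "p \<in> B'" for B B'
    using card_Int_blocks_le_1[OF that(1-3)] finite_block[OF that(1)] that(4,5)
    by (metis IntI card_0_eq empty_iff finite_Int le_neq_implies_less less_one)
  then show ?thesis
    unfolding independent_set_def complement_LSG_adj_iff by auto
qed

end

theorem mainTheorem2:
  fixes m n :: nat and X :: "'p set" and Gs Bs :: "'p set set"
  assumes "2 \<le> m" and "m < n"
    and "transversal_design m n X Gs Bs"
  shows "real (independence_number Bs (complement_graph LSG_adj)) = real n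
     \<and> shannon_capacity Bs (complement_graph LSG_adj) = real n
     \<and> lovasz_theta Bs (complement_graph LSG_adj) = real n"
proof -
  interpret transversal_2_design m n X Gs Bs by unfold_locales (rule assms(3))
  obtain R :: "'p set option set" and w u r0
    where rep: "orthonormal_representation Bs (complement_graph LSG_adj) R w u"
    and r0: "r0 \<in> R" "\<And>B. B \<in> Bs \<Longrightarrow> u B r0 = 1" and w: "w r0 = 1 / real n"
    using complement_LSG_orthonormal_representation[OF less_imp_le[OF assms(2)]] by blast
  have "X \<noteq> {}" using card_points m_ge_2 n_pos by auto
  then obtain p where p: "p \<in> X" by blast
  let ?S = "{B\<in>Bs. p \<in> B}"
  have S: "independent_set Bs (complement_graph LSG_adj) ?S"
    using independent_blocks_through_point[OF p] .
  have card_S: "card ?S = n" using card_blocks_through_point[OF p] .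
  have handle: "w r0 * card ?S = 1" using w card_S n_pos by simp
  show ?thesis
    using independence_number_lovasz_theta_eq_handle_bound[OF finite_blocks rep r0 S handle]
      shannon_capacity_eq_handle_bound[OF finite_blocks rep r0 S handle] card_S
    by simp
qed

end
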